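(* Consider a mean field game with finite state space $\mathcal{S}$, finite action space $\mathcal{A}$, transition rates $Q_{ija}(m)$, rewards $r_{ia}(m)$ and discount factor $\beta\in(0,1)$ satisfying the standing assumptions in the context. Let $\bar m\in\mathcal{P}(\mathcal{S})$ and let $d$ be a deterministic stationary strategy with $\mathcal{D}(\bar m)=\{d\}$. Then there is $\epsilon>0$ such that $\mathcal{D}(m')=\{d\}$ for all $m'\in\mathcal{P}(\mathcal{S})$ with $\|m'-\bar m\|<\epsilon$.
   Context: $\mathcal{S}=\{1,\dots,S\}$, $\mathcal{A}=\{1,\dots,A\}$, $\mathcal{P}(\mathcal{S})$ is the probability simplex in $\mathbb{R}^S$. For each $a$ and $m$, $(Q_{ija}(m))_{i,j}$ is a conservative generator ($Q_{ija}(m)\ge0$ for $i\neq j$, rows sum to $0$); each $m\mapsto Q_{ija}(m)$ is Lipschitz continuous and each $m\mapsto r_{ia}(m)$ is continuous on $\mathcal{P}(\mathcal{S})$. A deterministic stationary strategy is a map $d:\mathcal{S}\to\mathcal{A}$. For fixed $m$, $V^\ast(m)\in\mathbb{R}^S$ is the unique solution of $\beta V_i=\max_{a}\{r_{ia}(m)+\sum_jQ_{ija}(m)V_j\}$ (the optimal value of the discounted continuous-time MDP with constant rates $Q_{ija}(m)$ and rewards $r_{ia}(m)$). $O_i(m)=\operatorname{argmax}_{a}\{r_{ia}(m)+\sum_jQ_{ija}(m)V^\ast_j(m)\}$ and $\mathcal{D}(m)=\{d:\mathcal{S}\to\mathcal{A}: d(i)\in O_i(m)\ \forall i\}$. *)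

theory Defs
  imports "HOL-Analysis.Analysis"
begin

definition prob_simplex :: "(real^'s::finite) set" where
  "prob_simplex = {m. (\<forall>i. m $ i \<ge> 0) \<and> (\<Sum>i\<in>UNIV. m $ i) = 1}"

definition bellman_term ::
  "((real^'s) \<Rightarrow> 's \<Rightarrow> 's \<Rightarrow> 'a \<Rightarrow> real) \<Rightarrow> ((real^'s) \<Rightarrow> 's \<Rightarrow> 'a \<Rightarrow> real)
   \<Rightarrow> real^'s \<Rightarrow> ('s::finite \<Rightarrow> real) \<Rightarrow> 's \<Rightarrow> 'a \<Rightarrow> real" where
  "bellman_term Q r m V i a = r m i a + (\<Sum>j\<in>UNIV. Q m i j a * V j)"

definition opt_value ::
  "((real^'s) \<Rightarrow> 's \<Rightarrow> 's \<Rightarrow> 'a::finite \<Rightarrow> real) \<Rightarrow> ((real^'s) \<Rightarrow> 's \<Rightarrow> 'a \<Rightarrow> real)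
   \<Rightarrow> real \<Rightarrow> real^'s \<Rightarrow> ('s::finite \<Rightarrow> real)" where
  "opt_value Q r \<beta> m = (THE V. \<forall>i. \<beta> * V i = (MAX a\<in>UNIV. bellman_term Q r m V i a))"

definition opt_actions ::
  "((real^'s) \<Rightarrow> 's \<Rightarrow> 's \<Rightarrow> 'a::finite \<Rightarrow> real) \<Rightarrow> ((real^'s) \<Rightarrow> 's \<Rightarrow> 'a \<Rightarrow> real)
   \<Rightarrow> real \<Rightarrow> real^'s \<Rightarrow> 's::finite \<Rightarrow> 'a set" where
  "opt_actions Q r \<beta> m i =
     {a. \<forall>b. bellman_term Q r m (opt_value Q r \<beta> m) i b \<le> bellman_term Q r m (opt_value Q r \<beta> m) i a}"

definition opt_strategies ::
  "((real^'s) \<Rightarrow> 's \<Rightarrow> 's \<Rightarrow> 'a::finite \<Rightarrow> real) \<Rightarrow> ((real^'s) \<Rightarrow> 's \<Rightarrow> 'a \<Rightarrow> real)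
   \<Rightarrow> real \<Rightarrow> real^'s \<Rightarrow> ('s::finite \<Rightarrow> 'a) set" where
  "opt_strategies Q r \<beta> m = {d. \<forall>i. d i \<in> opt_actions Q r \<beta> m i}"

end

theory Submission
  imports Defs
begin

text \<open>The Bellman equation obeys a comparison principle: the off-diagonal rates are
  nonnegative and the rows sum to zero, so at a state where a subsolution exceeds a supersolution
  the most, the coupling term \<open>\<Sum>\<^sub>j Q\<^sub>i\<^sub>j\<^sub>a (X\<^sub>j - Y\<^sub>j)\<close> is nonpositive, and the excess is at most
  the sum of the two residuals divided by \<open>\<beta>\<close>. Hence \<open>V\<^sup>*(m)\<close> is unique, and it depends
  continuously on \<open>m\<close>, because \<open>V\<^sup>*(m\<^sub>0)\<close> has small residual for the equation at \<open>m\<close> near \<open>m\<^sub>0\<close>;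
  existence follows from uniformization. If \<open>d\<close> is the only optimal strategy at \<open>m\<^sub>0\<close>, then \<open>d i\<close>
  is the strict maximiser of the Bellman terms at every state, and these finitely many strict
  inequalities persist near \<open>m\<^sub>0\<close>.\<close>

lemma abs_Max_diff_le:
  fixes f g :: "'a::finite \<Rightarrow> real"
  assumes "\<And>a. \<bar>f a - g a\<bar> \<le> c"
  shows "\<bar>(MAX a. f a) - (MAX a. g a)\<bar> \<le> c"
proof -
  have Max_diff_le: "(MAX a. f a) - (MAX a. g a) \<le> c" if "\<And>a. f a - g a \<le> c" for f g :: "'a \<Rightarrow> real"
  proof -
    have "f a \<le> (MAX a. g a) + c" for a
    proof -
      have "g a \<le> (MAX a. g a)"
        by (rule Max_ge) auto
      then show ?thesis
        using that[of a] by linarith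
    qed
    then have "(MAX a. f a) \<le> (MAX a. g a) + c"
      by (simp add: Max_le_iff)
    then show ?thesis
      by linarith
  qed
  have "(MAX a. f a) - (MAX a. g a) \<le> c" "(MAX a. g a) - (MAX a. f a) \<le> c"
    by (rule Max_diff_le, use assms in \<open>simp add: abs_le_iff\<close>)+
  then show ?thesis
    by linarith
qed

lemma conservative_row_le_0_at_max:
  fixes G x :: "'s::finite \<Rightarrow> real"
  assumes "\<And>j. j \<noteq> i \<Longrightarrow> 0 \<le> G j" and "(\<Sum>j\<in>UNIV. G j) = 0" and "\<And>j. x j \<le> x i"
  shows "(\<Sum>j\<in>UNIV. G j * x j) \<le> 0"
proof -
  have "(\<Sum>j\<in>UNIV. G j * x j) = (\<Sum>j\<in>UNIV. G j * (x j - x i))"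
    using assms(2) by (simp add: right_diff_distrib sum_subtractf flip: sum_distrib_right)
  also have "\<dots> \<le> 0"
    using assms(1,3) by (intro sum_nonpos) (metis diff_le_0_iff_le diff_self mult_nonneg_nonpos mult_zero_right)
  finally show ?thesis .
qed

lemma infnorm_le_cart:
  fixes x :: "real^'n"
  assumes "\<And>i. \<bar>x $ i\<bar> \<le> c"
  shows "infnorm x \<le> c"
  unfolding infnorm_cart using assms by (intro cSup_least) auto

lemma infnorm_contraction_has_fixpoint:
  fixes f :: "'a::euclidean_space \<Rightarrow> 'a"
  assumes "0 \<le> \<kappa>" and "\<kappa> < 1"
    and contraction: "\<And>x y. infnorm (f x - f y) \<le> \<kappa> * infnorm (x - y)"
  shows "\<exists>x. f x = x"
proof -
  have iterate: "infnorm ((f ^^ k) x - (f ^^ k) y) \<le> \<kappa> ^ k * infnorm (x - y)" for k x y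
  proof (induction k)
    case 0
    show ?case by simp
  next
    case (Suc k)
    have "infnorm ((f ^^ Suc k) x - (f ^^ Suc k) y) \<le> \<kappa> * infnorm ((f ^^ k) x - (f ^^ k) y)"
      using contraction by simp
    also have "\<dots> \<le> \<kappa> * (\<kappa> ^ k * infnorm (x - y))"
      using Suc.IH \<open>0 \<le> \<kappa>\<close> by (rule mult_left_mono)
    finally show ?case
      by simp
  qed
  \<comment> \<open>All norms on a finite-dimensional space are equivalent, so a high enough iterate
    contracts the Euclidean distance, to which Banach's theorem applies.\<close>
  obtain k where k: "\<kappa> ^ k < 1 / sqrt DIM('a)"
    using real_arch_pow_inv[of "1 / sqrt DIM('a)" \<kappa>] \<open>\<kappa> < 1\<close> by auto
  define c where "c = sqrt DIM('a) * \<kappa> ^ k"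
  have "0 \<le> c" and "c < 1"
    using k \<open>0 \<le> \<kappa>\<close> by (auto simp: c_def field_simps)
  moreover have "dist ((f ^^ k) x) ((f ^^ k) y) \<le> c * dist x y" for x y
  proof -
    have "dist ((f ^^ k) x) ((f ^^ k) y) \<le> sqrt DIM('a) * infnorm ((f ^^ k) x - (f ^^ k) y)"
      by (simp add: dist_norm norm_le_infnorm)
    also have "\<dots> \<le> sqrt DIM('a) * (\<kappa> ^ k * infnorm (x - y))"
      using iterate by (intro mult_left_mono) auto
    also have "\<dots> \<le> c * dist x y"
      using infnorm_le_norm[of "x - y"] \<open>0 \<le> \<kappa>\<close> by (simp add: c_def dist_norm mult_left_mono)
    finally show ?thesis .
  qed
  ultimately obtain x where x: "(f ^^ k) x = x" and unique: "\<And>y. (f ^^ k) y = y \<Longrightarrow> y = x"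
    using banach_fix_type[of c "f ^^ k"] by metis
  have "(f ^^ k) (f x) = f x"
    using x by (metis funpow_swap1)
  then show ?thesis
    using unique by blast
qed

definition conservative_rates ::
  "((real^'s) \<Rightarrow> 's \<Rightarrow> 's \<Rightarrow> 'a \<Rightarrow> real) \<Rightarrow> real^'s::finite \<Rightarrow> bool" where
  "conservative_rates Q m \<longleftrightarrow>
     (\<forall>i j a. i \<noteq> j \<longrightarrow> 0 \<le> Q m i j a) \<and> (\<forall>i a. (\<Sum>j\<in>UNIV. Q m i j a) = 0)"

lemma bellman_term_diff:
  "bellman_term Q r m X i a - bellman_term Q r m Y i a = (\<Sum>j\<in>UNIV. Q m i j a * (X j - Y j))"
  by (simp add: bellman_term_def right_diff_distrib sum_subtractf)

definition bellman_solution ::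
  "((real^'s) \<Rightarrow> 's \<Rightarrow> 's \<Rightarrow> 'a::finite \<Rightarrow> real) \<Rightarrow> ((real^'s) \<Rightarrow> 's \<Rightarrow> 'a \<Rightarrow> real)
   \<Rightarrow> real \<Rightarrow> real^'s \<Rightarrow> ('s::finite \<Rightarrow> real) \<Rightarrow> bool" where
  "bellman_solution Q r \<beta> m V \<longleftrightarrow> (\<forall>i. \<beta> * V i = (MAX a\<in>UNIV. bellman_term Q r m V i a))"

lemma bellman_comparison:
  fixes Q :: "real^'s::finite \<Rightarrow> 's \<Rightarrow> 's \<Rightarrow> 'a::finite \<Rightarrow> real"
  assumes Q: "conservative_rates Q m" and \<beta>: "\<beta> > 0"
    and sub: "\<And>i. \<beta> * X i \<le> (MAX a. bellman_term Q r m X i a) + R"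
    and super: "\<And>i. (MAX a. bellman_term Q r m Y i a) \<le> \<beta> * Y i + S"
  shows "X i - Y i \<le> (R + S) / \<beta>"
proof -
  have "(MAX j. X j - Y j) \<in> range (\<lambda>j. X j - Y j)"
    by (rule Max_in) auto
  then obtain k where k: "X k - Y k = (MAX j. X j - Y j)"
    by (auto simp del: Max_in)
  have k_max: "X j - Y j \<le> X k - Y k" for j
    unfolding k by (rule Max_ge) auto
  have "(MAX b. bellman_term Q r m X k b) \<in> range (bellman_term Q r m X k)"
    by (rule Max_in) auto
  then obtain a where a: "(MAX b. bellman_term Q r m X k b) = bellman_term Q r m X k a"
    by (auto simp del: Max_in)
  have Y_le: "bellman_term Q r m Y k a \<le> (MAX b. bellman_term Q r m Y k b)"
    by (rule Max_ge) auto
  have "\<beta> * (X k - Y k) \<le> bellman_term Q r m X k a - bellman_term Q r m Y k a + R + S"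
    using sub[of k] super[of k] a Y_le unfolding right_diff_distrib by linarith
  also have "\<dots> = (\<Sum>j\<in>UNIV. Q m k j a * (X j - Y j)) + R + S"
    by (simp add: bellman_term_diff)
  also have "\<dots> \<le> R + S"
    using conservative_row_le_0_at_max[of k "\<lambda>j. Q m k j a" "\<lambda>j. X j - Y j"] Q k_max
    by (simp add: conservative_rates_def)
  finally have "X k - Y k \<le> (R + S) / \<beta>"
    using \<beta> by (simp add: field_simps)
  then show ?thesis
    using k_max[of i] by linarith
qed

lemma bellman_solution_unique:
  assumes Q: "conservative_rates Q m" and \<beta>: "\<beta> > 0"
    and V: "bellman_solution Q r \<beta> m V" and W: "bellman_solution Q r \<beta> m W"
  shows "V = W"
proof
  fix i
  have "V i - W i \<le> (0 + 0) / \<beta>"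
    by (rule bellman_comparison[where r = r, OF Q \<beta>]) (use V W in \<open>simp_all add: bellman_solution_def\<close>)
  moreover have "W i - V i \<le> (0 + 0) / \<beta>"
    by (rule bellman_comparison[where r = r, OF Q \<beta>]) (use V W in \<open>simp_all add: bellman_solution_def\<close>)
  ultimately show "V i = W i"
    by simp
qed

lemma bellman_solution_perturbation:
  assumes Q: "conservative_rates Q m" and \<beta>: "\<beta> > 0" and V: "bellman_solution Q r \<beta> m V"
    and residual: "\<And>i. \<bar>\<beta> * W i - (MAX a. bellman_term Q r m W i a)\<bar> \<le> R"
  shows "\<bar>V i - W i\<bar> \<le> R / \<beta>"
proof -
  have sub: "\<beta> * W j \<le> (MAX a. bellman_term Q r m W j a) + R"
    and super: "(MAX a. bellman_term Q r m W j a) \<le> \<beta> * W j + R" for j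
    using residual[of j] by linarith+
  have "V i - W i \<le> (0 + R) / \<beta>"
    by (rule bellman_comparison[where r = r, OF Q \<beta> _ super])
      (use V in \<open>simp add: bellman_solution_def\<close>)
  moreover have "W i - V i \<le> (R + 0) / \<beta>"
    by (rule bellman_comparison[where r = r, OF Q \<beta> sub])
      (use V in \<open>simp add: bellman_solution_def\<close>)
  ultimately show ?thesis
    by simp
qed

text \<open>Uniformization: for \<open>\<nu> \<ge> -Q\<^sub>i\<^sub>i\<^sub>a\<close> the rates \<open>Q + \<nu> I\<close> are nonnegative with row
  sums \<open>\<nu>\<close>, so adding \<open>\<nu> V\<^sub>i\<close> to both sides of the Bellman equation turns it into the
  fixed-point equation of a sup-norm contraction with modulus \<open>\<nu> / (\<beta> + \<nu>)\<close>.\<close>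

definition uniformized_bellman ::
  "((real^'s) \<Rightarrow> 's \<Rightarrow> 's \<Rightarrow> 'a::finite \<Rightarrow> real) \<Rightarrow> ((real^'s) \<Rightarrow> 's \<Rightarrow> 'a \<Rightarrow> real)
   \<Rightarrow> real \<Rightarrow> real \<Rightarrow> real^'s \<Rightarrow> real^'s \<Rightarrow> (real^'s::finite)" where
  "uniformized_bellman Q r \<beta> \<nu> m x =
     (\<chi> i. ((MAX a. bellman_term Q r m (vec_nth x) i a) + \<nu> * x $ i) / (\<beta> + \<nu>))"

lemma uniformized_bellman_fixpoint_iff:
  assumes "\<beta> + \<nu> \<noteq> 0"
  shows "uniformized_bellman Q r \<beta> \<nu> m x = x \<longleftrightarrow> bellman_solution Q r \<beta> m (vec_nth x)"
  using assms by (auto simp: uniformized_bellman_def bellman_solution_def vec_eq_iff field_simps)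

lemma uniformized_bellman_contraction:
  fixes Q :: "real^'s::finite \<Rightarrow> 's \<Rightarrow> 's \<Rightarrow> 'a::finite \<Rightarrow> real"
  assumes Q: "conservative_rates Q m" and \<beta>: "\<beta> > 0"
    and \<nu>: "0 \<le> \<nu>" "\<And>i a. 0 \<le> Q m i i a + \<nu>"
  shows "infnorm (uniformized_bellman Q r \<beta> \<nu> m x - uniformized_bellman Q r \<beta> \<nu> m y)
    \<le> \<nu> / (\<beta> + \<nu>) * infnorm (x - y)"
proof (rule infnorm_le_cart)
  fix i
  let ?B = "\<lambda>x a. bellman_term Q r m (vec_nth x) i a + \<nu> * x $ i"
  have "\<bar>?B x a - ?B y a\<bar> \<le> \<nu> * infnorm (x - y)" for a
  proof -
    define P where "P j = Q m i j a + (if j = i then \<nu> else 0)" for j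
    have P_nonneg: "0 \<le> P j" for j
      using Q \<nu> by (auto simp: P_def conservative_rates_def)
    have "?B x a - ?B y a
        = (bellman_term Q r m (vec_nth x) i a - bellman_term Q r m (vec_nth y) i a) + \<nu> * (x $ i - y $ i)"
      by (simp add: algebra_simps)
    also have "\<dots> = (\<Sum>j\<in>UNIV. Q m i j a * (x $ j - y $ j))
        + (\<Sum>j\<in>UNIV. if j = i then \<nu> * (x $ j - y $ j) else 0)"
      by (simp add: bellman_term_diff)
    also have "\<dots> = (\<Sum>j\<in>UNIV. P j * (x - y) $ j)"
      unfolding P_def distrib_right sum.distrib by (intro arg_cong2[where f = "(+)"] sum.cong) auto
    also have "\<bar>\<dots>\<bar> \<le> (\<Sum>j\<in>UNIV. P j * infnorm (x - y))"
      using P_nonneg component_le_infnorm_cart[of "x - y"]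
      by (intro order_trans[OF sum_abs] sum_mono) (simp add: abs_mult mult_left_mono)
    also have "\<dots> = \<nu> * infnorm (x - y)"
      using Q by (simp add: P_def sum.distrib conservative_rates_def flip: sum_distrib_right)
    finally show ?thesis .
  qed
  then have "\<bar>(MAX a. ?B x a) - (MAX a. ?B y a)\<bar> \<le> \<nu> * infnorm (x - y)"
    by (rule abs_Max_diff_le)
  then show "\<bar>(uniformized_bellman Q r \<beta> \<nu> m x - uniformized_bellman Q r \<beta> \<nu> m y) $ i\<bar>
      \<le> \<nu> / (\<beta> + \<nu>) * infnorm (x - y)"
    using \<beta> \<nu> by (simp add: uniformized_bellman_def Max_add_commute abs_divide divide_right_mono
        flip: diff_divide_distrib)
qed

lemma bellman_solution_exists:
  fixes Q :: "real^'s::finite \<Rightarrow> 's \<Rightarrow> 's \<Rightarrow> 'a::finite \<Rightarrow> real"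
  assumes Q: "conservative_rates Q m" and \<beta>: "\<beta> > 0"
  shows "\<exists>V. bellman_solution Q r \<beta> m V"
proof -
  define \<nu> where "\<nu> = (\<Sum>i\<in>UNIV. \<Sum>a\<in>UNIV. \<bar>Q m i i a\<bar>)"
  have \<nu>: "0 \<le> \<nu>" "0 \<le> Q m i i a + \<nu>" for i a
  proof -
    have "\<bar>Q m i i a\<bar> \<le> (\<Sum>a\<in>UNIV. \<bar>Q m i i a\<bar>)"
      by (rule member_le_sum) auto
    also have "\<dots> \<le> \<nu>"
      unfolding \<nu>_def by (rule member_le_sum) (auto intro: sum_nonneg)
    finally show "0 \<le> \<nu>" "0 \<le> Q m i i a + \<nu>"
      by linarith+
  qed
  have "0 \<le> \<nu> / (\<beta> + \<nu>)" "\<nu> / (\<beta> + \<nu>) < 1"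
    using \<beta> \<nu> by auto
  then obtain x where "uniformized_bellman Q r \<beta> \<nu> m x = x"
    using infnorm_contraction_has_fixpoint uniformized_bellman_contraction[OF Q \<beta> \<nu>] by blast
  moreover have "\<beta> + \<nu> \<noteq> 0"
    using \<beta> \<nu> by simp
  ultimately show ?thesis
    using uniformized_bellman_fixpoint_iff by blast
qed

lemma bellman_solution_opt_value:
  fixes Q :: "real^'s::finite \<Rightarrow> 's \<Rightarrow> 's \<Rightarrow> 'a::finite \<Rightarrow> real"
  assumes "conservative_rates Q m" and "\<beta> > 0"
  shows "bellman_solution Q r \<beta> m (opt_value Q r \<beta> m)"
proof -
  have "\<exists>!V. bellman_solution Q r \<beta> m V"
    using bellman_solution_exists bellman_solution_unique assms by metis
  then show ?thesis
    unfolding opt_value_def bellman_solution_def[symmetric] by (rule theI')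
qed

lemma bellman_residual_le:
  fixes Q :: "real^'s::finite \<Rightarrow> 's \<Rightarrow> 's \<Rightarrow> 'a::finite \<Rightarrow> real"
  assumes "bellman_solution Q r \<beta> m0 W"
  shows "\<bar>\<beta> * W i - (MAX a. bellman_term Q r m W i a)\<bar>
    \<le> (\<Sum>i\<in>UNIV. \<Sum>a\<in>UNIV. \<bar>bellman_term Q r m W i a - bellman_term Q r m0 W i a\<bar>)"
    (is "_ \<le> ?\<delta>")
proof -
  have "\<bar>bellman_term Q r m0 W i a - bellman_term Q r m W i a\<bar> \<le> ?\<delta>" for a
  proof -
    have "\<bar>bellman_term Q r m0 W i a - bellman_term Q r m W i a\<bar>
        \<le> (\<Sum>a\<in>UNIV. \<bar>bellman_term Q r m W i a - bellman_term Q r m0 W i a\<bar>)"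
      by (subst abs_minus_commute) (rule member_le_sum, auto)
    also have "\<dots> \<le> ?\<delta>"
      by (rule member_le_sum) (auto intro: sum_nonneg)
    finally show ?thesis .
  qed
  then have "\<bar>(MAX a. bellman_term Q r m0 W i a) - (MAX a. bellman_term Q r m W i a)\<bar> \<le> ?\<delta>"
    by (rule abs_Max_diff_le)
  then show ?thesis
    using assms by (simp add: bellman_solution_def)
qed

lemma opt_value_tendsto:
  fixes Q :: "real^'s::finite \<Rightarrow> 's \<Rightarrow> 's \<Rightarrow> 'a::finite \<Rightarrow> real"
  assumes "conservative_rates Q m0" and conservative: "eventually (\<lambda>m. conservative_rates Q m) F"
    and \<beta>: "\<beta> > 0"
    and Q: "\<And>i j a. ((\<lambda>m. Q m i j a) \<longlongrightarrow> Q m0 i j a) F"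
    and r: "\<And>i a. ((\<lambda>m. r m i a) \<longlongrightarrow> r m0 i a) F"
  shows "((\<lambda>m. opt_value Q r \<beta> m j) \<longlongrightarrow> opt_value Q r \<beta> m0 j) F"
proof -
  define W where "W = opt_value Q r \<beta> m0"
  define \<delta> where "\<delta> m = (\<Sum>i\<in>UNIV. \<Sum>a\<in>UNIV. \<bar>bellman_term Q r m W i a - bellman_term Q r m0 W i a\<bar>)" for m
  have W: "bellman_solution Q r \<beta> m0 W"
    unfolding W_def using assms(1) \<beta> by (rule bellman_solution_opt_value)
  have bellman_tendsto: "((\<lambda>m. bellman_term Q r m W i a) \<longlongrightarrow> bellman_term Q r m0 W i a) F" for i a
    unfolding bellman_term_def by (intro tendsto_add tendsto_sum tendsto_mult tendsto_const Q r)
  have "(\<delta> \<longlongrightarrow> (\<Sum>i\<in>UNIV. \<Sum>a\<in>UNIV. \<bar>bellman_term Q r m0 W i a - bellman_term Q r m0 W i a\<bar>)) F"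
    unfolding \<delta>_def by (intro tendsto_sum tendsto_rabs tendsto_diff bellman_tendsto tendsto_const)
  then have \<delta>_tendsto: "((\<lambda>m. \<delta> m / \<beta>) \<longlongrightarrow> 0) F"
    by (simp add: tendsto_divide_zero)
  have "eventually (\<lambda>m. \<bar>opt_value Q r \<beta> m j - W j\<bar> \<le> \<delta> m / \<beta>) F"
    using conservative
  proof eventually_elim
    case (elim m)
    show ?case
      unfolding \<delta>_def using bellman_solution_perturbation[OF elim \<beta> bellman_solution_opt_value[OF elim \<beta>]
          bellman_residual_le[OF W]] .
  qed
  then have "((\<lambda>m. opt_value Q r \<beta> m j - W j) \<longlongrightarrow> 0) F"
    by (rule Lim_null_comparison[OF eventually_mono \<delta>_tendsto]) simp
  then show ?thesis
    unfolding W_def by (rule LIM_zero_cancel)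
qed

lemma argmax_strategies_eq_singleton_iff:
  fixes f :: "'s \<Rightarrow> 'a \<Rightarrow> real"
  shows "{d'. \<forall>i b. f i b \<le> f i (d' i)} = {d} \<longleftrightarrow> (\<forall>i b. b \<noteq> d i \<longrightarrow> f i b < f i (d i))"
proof
  assume unique: "{d'. \<forall>i b. f i b \<le> f i (d' i)} = {d}"
  then have d_opt: "f i c \<le> f i (d i)" for i c
    by blast
  show "\<forall>i b. b \<noteq> d i \<longrightarrow> f i b < f i (d i)"
  proof (intro allI impI)
    fix i b
    assume "b \<noteq> d i"
    show "f i b < f i (d i)"
    proof (rule ccontr)
      assume "\<not> f i b < f i (d i)"
      then have "f i (d i) \<le> f i b"
        by simp
      then have "\<forall>j c. f j c \<le> f j ((d(i := b)) j)"
        using d_opt by (metis fun_upd_apply order_trans)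
      then have "d(i := b) = d"
        using unique by blast
      then show False
        using \<open>b \<noteq> d i\<close> by (metis fun_upd_same)
    qed
  qed
next
  assume strict: "\<forall>i b. b \<noteq> d i \<longrightarrow> f i b < f i (d i)"
  show "{d'. \<forall>i b. f i b \<le> f i (d' i)} = {d}"
  proof (intro equalityI subsetI)
    fix d'
    assume "d' \<in> {d'. \<forall>i b. f i b \<le> f i (d' i)}"
    then have "d' i = d i" for i
      using strict by (metis mem_Collect_eq not_less)
    then show "d' \<in> {d}"
      by auto
  next
    fix d'
    assume "d' \<in> {d}"
    moreover have "f i b \<le> f i (d i)" for i b
      using strict by (cases "b = d i") (auto intro: less_imp_le)
    ultimately show "d' \<in> {d'. \<forall>i b. f i b \<le> f i (d' i)}"
      by simp
  qed
qed

lemma opt_strategies_eq_singleton_iff: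
  fixes Q :: "real^'s::finite \<Rightarrow> 's \<Rightarrow> 's \<Rightarrow> 'a::finite \<Rightarrow> real"
  shows "opt_strategies Q r \<beta> m = {d} \<longleftrightarrow>
     (\<forall>i b. b \<noteq> d i \<longrightarrow>
        bellman_term Q r m (opt_value Q r \<beta> m) i b < bellman_term Q r m (opt_value Q r \<beta> m) i (d i))"
  unfolding opt_strategies_def opt_actions_def
  by (simp add: argmax_strategies_eq_singleton_iff)

lemma opt_strategies_eventually_eq:
  fixes Q :: "real^'s::finite \<Rightarrow> 's \<Rightarrow> 's \<Rightarrow> 'a::finite \<Rightarrow> real"
  assumes "conservative_rates Q m0" and "eventually (\<lambda>m. conservative_rates Q m) F"
    and "\<beta> > 0"
    and Q: "\<And>i j a. ((\<lambda>m. Q m i j a) \<longlongrightarrow> Q m0 i j a) F"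
    and r: "\<And>i a. ((\<lambda>m. r m i a) \<longlongrightarrow> r m0 i a) F"
    and unique: "opt_strategies Q r \<beta> m0 = {d}"
  shows "eventually (\<lambda>m. opt_strategies Q r \<beta> m = {d}) F"
proof -
  let ?B = "\<lambda>m. bellman_term Q r m (opt_value Q r \<beta> m)"
  have V_tendsto: "((\<lambda>m. opt_value Q r \<beta> m j) \<longlongrightarrow> opt_value Q r \<beta> m0 j) F" for j
    using assms(1-3) Q r by (rule opt_value_tendsto)
  have B_tendsto: "((\<lambda>m. ?B m i a) \<longlongrightarrow> ?B m0 i a) F" for i a
    unfolding bellman_term_def by (intro tendsto_add tendsto_sum tendsto_mult Q r V_tendsto)
  have strict_near: "eventually (\<lambda>m. b \<noteq> d i \<longrightarrow> ?B m i b < ?B m i (d i)) F" for i b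
  proof (cases "b = d i")
    case True
    then show ?thesis by simp
  next
    case False
    then have strict_at_m0: "?B m0 i b < ?B m0 i (d i)"
      using unique by (simp add: opt_strategies_eq_singleton_iff)
    have "((\<lambda>m. ?B m i (d i) - ?B m i b) \<longlongrightarrow> ?B m0 i (d i) - ?B m0 i b) F"
      by (intro tendsto_diff B_tendsto)
    then have "eventually (\<lambda>m. 0 < ?B m i (d i) - ?B m i b) F"
      by (rule order_tendstoD(1)) (use strict_at_m0 in simp)
    then show ?thesis
      by eventually_elim simp
  qed
  have "eventually (\<lambda>m. \<forall>i b. b \<noteq> d i \<longrightarrow> ?B m i b < ?B m i (d i)) F"
    by (intro eventually_all_finite strict_near)
  then show ?thesis
    by (simp add: opt_strategies_eq_singleton_iff)
qed

theorem lemma4p1: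
  fixes Q :: "(real^'s::finite) \<Rightarrow> 's \<Rightarrow> 's \<Rightarrow> 'a::finite \<Rightarrow> real"
    and r :: "(real^'s) \<Rightarrow> 's \<Rightarrow> 'a \<Rightarrow> real"
    and \<beta> :: real
    and mbar :: "real^'s"
    and d :: "'s \<Rightarrow> 'a"
  assumes beta: "0 < \<beta>" "\<beta> < 1"
    and Q_offdiag: "\<And>m i j a. m \<in> prob_simplex \<Longrightarrow> i \<noteq> j \<Longrightarrow> Q m i j a \<ge> 0"
    and Q_rows: "\<And>m i a. m \<in> prob_simplex \<Longrightarrow> (\<Sum>j\<in>UNIV. Q m i j a) = 0"
    and Q_lip: "\<And>i j a. \<exists>L. L-lipschitz_on prob_simplex (\<lambda>m. Q m i j a)"
    and r_cont: "\<And>i a. continuous_on prob_simplex (\<lambda>m. r m i a)"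
    and mbar: "mbar \<in> prob_simplex"
    and unique: "opt_strategies Q r \<beta> mbar = {d}"
  shows "\<exists>\<epsilon>>0. \<forall>m'\<in>prob_simplex. norm (m' - mbar) < \<epsilon> \<longrightarrow> opt_strategies Q r \<beta> m' = {d}"
proof -
  let ?F = "at mbar within prob_simplex"
  have conservative: "conservative_rates Q m" if "m \<in> prob_simplex" for m
    using Q_offdiag[OF that] Q_rows[OF that] by (simp add: conservative_rates_def)
  have Q_tendsto: "((\<lambda>m. Q m i j a) \<longlongrightarrow> Q mbar i j a) ?F" for i j a
  proof -
    obtain L where "L-lipschitz_on prob_simplex (\<lambda>m. Q m i j a)"
      using Q_lip by blast
    then show ?thesis
      using lipschitz_on_continuous_on mbar unfolding continuous_on_def by blast
  qed
  have r_tendsto: "((\<lambda>m. r m i a) \<longlongrightarrow> r mbar i a) ?F" for i a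
    using r_cont[of i a] mbar unfolding continuous_on_def by blast
  have "eventually (\<lambda>m. conservative_rates Q m) ?F"
    using conservative by (auto simp: eventually_at_filter)
  then have "eventually (\<lambda>m. opt_strategies Q r \<beta> m = {d}) ?F"
    by (rule opt_strategies_eventually_eq[OF conservative[OF mbar] _ beta(1) Q_tendsto r_tendsto unique])
  then obtain \<epsilon> where "\<epsilon> > 0"
    and near: "\<And>m. m \<in> prob_simplex \<Longrightarrow> m \<noteq> mbar \<Longrightarrow> dist m mbar < \<epsilon> \<Longrightarrow> opt_strategies Q r \<beta> m = {d}"
    unfolding eventually_at by blast
  show ?thesis
  proof (intro exI[of _ \<epsilon>] conjI ballI impI \<open>\<epsilon> > 0\<close>)
    fix m'
    assume "m' \<in> prob_simplex" and "norm (m' - mbar) < \<epsilon>"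
    then show "opt_strategies Q r \<beta> m' = {d}"
      using unique near[of m'] by (cases "m' = mbar") (simp_all add: dist_norm)
  qed
qed

end
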